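(* Let $n\ge 2$ be an integer. For $i=1,2$ let $X_{i1},\dots,X_{in}$ be a random sample from the density $\frac{1}{\sigma}e^{-(x-\mu_i)/\sigma}$, $x\ge\mu_i$, the two samples independent, $\underline{\theta}=(\mu_1,\mu_2,\sigma)\in\mathbb{R}^2\times(0,\infty)$. Let $X_i=\min_jX_{ij}$, $Z_2=\max\{X_1,X_2\}$, $\mu_M=\mu_1I(X_1\ge X_2)+\mu_2I(X_1<X_2)$, $\mu=n(\max\{\mu_1,\mu_2\}-\min\{\mu_1,\mu_2\})/\sigma$, and $U=\frac{Z_2-\mu_M}{\sigma}$. Then for every $\underline{\theta}$, (i) $\mathbb{E}_{\underline{\theta}}(U)=\frac{1}{n}\left[\left(\frac{\mu+1}{2}\right)e^{-\mu}+1\right]$; (ii) $\mathbb{E}_{\underline{\theta}}(U^2)=\frac{1}{n^2}\left[\frac{\mu^2+3\mu+3}{2}e^{-\mu}+2\right]$.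
   Context: $I(A)$ is the indicator of $A$; $\mathbb{E}_{\underline{\theta}}$ is expectation under the parameter $\underline{\theta}$. *)

theory Defs
  imports "HOL-Probability.Probability"
begin

definition sample_min :: "nat \<Rightarrow> (nat \<Rightarrow> 'a \<Rightarrow> real) \<Rightarrow> 'a \<Rightarrow> real" where
  "sample_min n Y \<omega> = Min ((\<lambda>j. Y j \<omega>) ` {1..n})"

end

theory Submission
  imports Defs "HOL-Probability.Probability" "HOL-Real_Asymp.Real_Asymp"
begin

text \<open>
  The standardized sample minima \<open>W\<^sub>i = n (X\<^sub>i - \<mu>\<^sub>i) / \<sigma>\<close> are independent standard
  exponentials, since the minimum of \<open>n\<close> independent \<open>Exp(1/\<sigma>)\<close> variables is
  \<open>Exp(n/\<sigma>)\<close>. With \<open>a = n (\<mu>\<^sub>1 - \<mu>\<^sub>2) / \<sigma>\<close> we have \<open>X\<^sub>1 \<ge> X\<^sub>2\<close> iff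
  \<open>W\<^sub>2 \<le> W\<^sub>1 + a\<close>, and then \<open>n U = W\<^sub>1\<close>; otherwise \<open>n U = W\<^sub>2\<close>. The moments of
  \<open>n U\<close> are double integrals against \<open>e\<^sup>-\<^sup>x\<^sup>-\<^sup>y\<close>; exchanging the two variables
  replaces \<open>a\<close> by \<open>-a\<close>, so we may take \<open>a \<ge> 0\<close>, split the inner integral at
  \<open>y = x + a\<close> and evaluate both integrals with explicit antiderivatives.
\<close>

lemma (in prob_space) indep_sets_reindex:
  assumes indep: "indep_sets F (f ` J)" and inj: "inj_on f J"
  shows "indep_sets (\<lambda>j. F (f j)) J"
  unfolding indep_sets_def
proof (intro conjI ballI allI impI)
  show "F (f j) \<subseteq> events" if "j \<in> J" for j
    using indep that by (auto simp: indep_sets_def)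
next
  fix K A assume K: "K \<subseteq> J" "K \<noteq> {}" "finite K" and A: "A \<in> (\<Pi> j\<in>K. F (f j))"
  define B where "B i = A (the_inv_into K f i)" for i
  have inj_K: "inj_on f K" using inj K(1) by (rule inj_on_subset)
  have B: "B (f j) = A j" if "j \<in> K" for j
    using inj_K that by (simp add: B_def the_inv_into_f_f)
  have "B \<in> (\<Pi> i\<in>f ` K. F i)" using A B by auto
  moreover have "f ` K \<subseteq> f ` J" "f ` K \<noteq> {}" "finite (f ` K)"
    using K by auto
  ultimately have "prob (\<Inter>i\<in>f ` K. B i) = (\<Prod>i\<in>f ` K. prob (B i))"
    using indep unfolding indep_sets_def by blast
  then show "prob (\<Inter>j\<in>K. A j) = (\<Prod>j\<in>K. prob (A j))"
    using B inj_K by (simp add: prod.reindex cong: INF_cong)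
qed

lemma (in prob_space) indep_vars_reindex:
  assumes "indep_vars M' X (f ` J)" and "inj_on f J"
  shows "indep_vars (\<lambda>j. M' (f j)) (\<lambda>j. X (f j)) J"
  using assms indep_sets_reindex[of "\<lambda>i. {X i -` A \<inter> space M | A. A \<in> sets (M' i)}" f J]
  by (simp add: indep_vars_def2)

lemma (in prob_space) indep_vars_row:
  assumes "indep_vars M' (\<lambda>(i, j). X i j) (I \<times> J)" and "i \<in> I"
  shows "indep_vars (\<lambda>j. M' (i, j)) (X i) J"
proof -
  have "indep_vars M' (\<lambda>(i, j). X i j) (Pair i ` J)"
    using assms(2) by (intro indep_vars_subset[OF assms(1)]) auto
  then show ?thesis
    using indep_vars_reindex[of M' "\<lambda>(i, j). X i j" "Pair i" J] by (simp add: inj_on_def)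
qed

lemma (in prob_space) indep_var_Min_blocks:
  fixes X :: "'i \<Rightarrow> 'j \<Rightarrow> 'a \<Rightarrow> real"
  assumes indep: "indep_vars (\<lambda>_. borel) (\<lambda>(i, j). X i j) (I \<times> J)"
    and J: "finite J" and i: "i \<in> I" "i' \<in> I" "i \<noteq> i'"
  shows "indep_var borel (\<lambda>\<omega>. Min ((\<lambda>j. X i j \<omega>) ` J))
    borel (\<lambda>\<omega>. Min ((\<lambda>j. X i' j \<omega>) ` J))"
proof -
  let ?Y = "\<lambda>p \<omega>. (case p of (i, j) \<Rightarrow> X i j) \<omega>"
  let ?row = "\<lambda>i f. Min ((\<lambda>j. f (i, j)) ` J)"
  have "indep_var
      borel (?row i \<circ> (\<lambda>\<omega>. restrict (\<lambda>p. ?Y p \<omega>) ({i} \<times> J)))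
      borel (?row i' \<circ> (\<lambda>\<omega>. restrict (\<lambda>p. ?Y p \<omega>) ({i'} \<times> J)))"
    using i J by (intro indep_var_compose[OF indep_var_restrict[OF indep]]) auto
  also have "?row i \<circ> (\<lambda>\<omega>. restrict (\<lambda>p. ?Y p \<omega>) ({i} \<times> J)) = (\<lambda>\<omega>. Min ((\<lambda>j. X i j \<omega>) ` J))"
    by (auto simp: fun_eq_iff cong: image_cong)
  also have "?row i' \<circ> (\<lambda>\<omega>. restrict (\<lambda>p. ?Y p \<omega>) ({i'} \<times> J)) = (\<lambda>\<omega>. Min ((\<lambda>j. X i' j \<omega>) ` J))"
    by (auto simp: fun_eq_iff cong: image_cong)
  finally show ?thesis .
qed

lemma (in prob_space) distributed_exponential_shift:
  assumes "distributed M lborel X (\<lambda>x. ennreal (exponential_density l (x - m)))"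
  shows "distributed M lborel (\<lambda>\<omega>. X \<omega> - m) (exponential_density l)"
  using distributed_affine[OF assms, of 1 "- m"] by (simp add: divide_ennreal_def)

lemma (in prob_space) distributed_exponential_standardize:
  assumes X: "distributed M lborel X (\<lambda>x. ennreal (exponential_density l (x - m)))" and l: "0 < l"
  shows "distributed M lborel (\<lambda>\<omega>. l * (X \<omega> - m)) (exponential_density 1)"
proof -
  have "distributed M lborel (\<lambda>\<omega>. 0 + l * (X \<omega> - m))
      (\<lambda>x. ennreal (exponential_density l ((x - 0) / l)) / \<bar>l\<bar>)"
    using l by (intro distributed_affine distributed_exponential_shift X) simp
  also have "(\<lambda>x. ennreal (exponential_density l ((x - 0) / l)) / \<bar>l\<bar>) = exponential_density 1"
    using l by (auto simp: fun_eq_iff exponential_density_def divide_ennreal divide_less_0_iff)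
  finally show ?thesis by simp
qed

lemma (in prob_space) distributed_exponential_Min_shift:
  fixes l :: real
  assumes J: "finite J" "J \<noteq> {}" and l: "0 < l"
    and indep: "indep_vars (\<lambda>_. borel) Y J"
    and Y: "\<And>j. j \<in> J \<Longrightarrow> distributed M lborel (Y j) (\<lambda>x. ennreal (exponential_density l (x - m)))"
  shows "distributed M lborel (\<lambda>\<omega>. Min ((\<lambda>j. Y j \<omega>) ` J))
      (\<lambda>x. ennreal (exponential_density (card J * l) (x - m)))"
proof -
  have "distributed M lborel (\<lambda>\<omega>. Min ((\<lambda>j. Y j \<omega> - m) ` J)) (exponential_density (\<Sum>j\<in>J. l))"
    using J l Y by (intro exponential_distributed_Min indep_vars_compose2[OF indep]
        distributed_exponential_shift) auto
  from distributed_affine[OF this, of 1 m]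
  have "distributed M lborel (\<lambda>\<omega>. m + Min ((\<lambda>j. Y j \<omega> - m) ` J))
      (\<lambda>x. ennreal (exponential_density (card J * l) (x - m)))"
    by (simp add: divide_ennreal_def)
  moreover have "m + Min ((\<lambda>j. Y j \<omega> - m) ` J) = Min ((\<lambda>j. Y j \<omega>) ` J)" for \<omega>
  proof -
    have "(\<lambda>j. Y j \<omega> - m) ` J = (\<lambda>y. y - m) ` (\<lambda>j. Y j \<omega>) ` J" by (simp add: image_image)
    then show ?thesis
      using J mono_Min_commute[of "\<lambda>y. y - m" "(\<lambda>j. Y j \<omega>) ` J"] by (simp add: mono_def)
  qed
  ultimately show ?thesis by simp
qed

lemma nn_integral_exponential_density_split:
  fixes c v :: real and \<phi> P :: "real \<Rightarrow> real"
  assumes c: "0 \<le> c" and v: "0 \<le> v"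
    and [measurable]: "\<phi> \<in> borel_measurable borel"
    and P: "\<And>y. DERIV P y :> exp (- y) * \<phi> y" and P_lim: "(P \<longlongrightarrow> 0) at_top"
    and \<phi>_nonneg: "\<And>y. c \<le> y \<Longrightarrow> 0 \<le> \<phi> y" and P_c: "P c \<le> 0"
  shows "(\<integral>\<^sup>+y. ennreal (exponential_density 1 y * (if y \<le> c then v else \<phi> y)) \<partial>lborel)
       = ennreal (v * (1 - exp (- c)) - P c)"
proof -
  have "(\<integral>\<^sup>+y. ennreal (exponential_density 1 y * (if y \<le> c then v else \<phi> y)) \<partial>lborel)
     = (\<integral>\<^sup>+y. ennreal (exp (- y) * v) * indicator {0..c} y
           + ennreal (exp (- y) * \<phi> y) * indicator {c..} y \<partial>lborel)"
    using AE_lborel_singleton[of c]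
    by (intro nn_integral_cong_AE, eventually_elim)
       (use c in \<open>auto simp: exponential_density_def indicator_def\<close>)
  also have "\<dots> = (\<integral>\<^sup>+y. ennreal (exp (- y) * v) * indicator {0..c} y \<partial>lborel)
      + (\<integral>\<^sup>+y. ennreal (exp (- y) * \<phi> y) * indicator {c..} y \<partial>lborel)"
    by (rule nn_integral_add) auto
  also have "(\<integral>\<^sup>+y. ennreal (exp (- y) * v) * indicator {0..c} y \<partial>lborel)
      = ennreal (- v * exp (- c) - - v * exp (- 0))"
    by (rule nn_integral_FTC_Icc) (use c v in \<open>auto intro!: derivative_eq_intros\<close>)
  also have "(\<integral>\<^sup>+y. ennreal (exp (- y) * \<phi> y) * indicator {c..} y \<partial>lborel) = ennreal (0 - P c)"
    by (rule nn_integral_FTC_atLeast) (use P \<phi>_nonneg P_lim in auto)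
  also have "ennreal (- v * exp (- c) - - v * exp (- 0)) + ennreal (0 - P c)
      = ennreal (v * (1 - exp (- c)) - P c)"
    using c v P_c mult_left_mono[of "exp (- c)" 1 v]
    by (subst ennreal_plus[symmetric]) (auto simp: algebra_simps)
  finally show ?thesis .
qed

lemma nn_integral_exponential_density_pair:
  fixes G :: "real \<Rightarrow> real \<Rightarrow> real" and H Q :: "real \<Rightarrow> real"
  assumes [measurable]: "case_prod G \<in> borel_measurable (lborel \<Otimes>\<^sub>M lborel)"
    and [measurable]: "H \<in> borel_measurable borel"
    and inner: "\<And>x. 0 \<le> x \<Longrightarrow>
        (\<integral>\<^sup>+y. ennreal (exponential_density 1 y * G x y) \<partial>lborel) = ennreal (H x)"
    and H_nonneg: "\<And>x. 0 \<le> x \<Longrightarrow> 0 \<le> H x"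
    and Q: "\<And>x. DERIV Q x :> exp (- x) * H x" and Q_lim: "(Q \<longlongrightarrow> 0) at_top"
  shows "(\<integral>\<^sup>+x. \<integral>\<^sup>+y. ennreal (exponential_density 1 x * exponential_density 1 y * G x y)
      \<partial>lborel \<partial>lborel) = ennreal (- Q 0)"
proof -
  have "(\<integral>\<^sup>+x. \<integral>\<^sup>+y. ennreal (exponential_density 1 x * exponential_density 1 y * G x y)
        \<partial>lborel \<partial>lborel)
      = (\<integral>\<^sup>+x. ennreal (exponential_density 1 x)
          * (\<integral>\<^sup>+y. ennreal (exponential_density 1 y * G x y) \<partial>lborel) \<partial>lborel)"
    by (subst nn_integral_cmult[symmetric])
       (auto intro!: nn_integral_cong simp: ennreal_mult' exponential_density_nonneg mult.assoc)
  also have "\<dots> = (\<integral>\<^sup>+x. ennreal (exp (- x) * H x) * indicator {0..} x \<partial>lborel)"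
  proof (intro nn_integral_cong)
    fix x :: real
    show "ennreal (exponential_density 1 x)
        * (\<integral>\<^sup>+y. ennreal (exponential_density 1 y * G x y) \<partial>lborel)
      = ennreal (exp (- x) * H x) * indicator {0..} x"
      by (cases "0 \<le> x")
         (simp_all add: inner, simp_all add: exponential_density_def ennreal_mult')
  qed
  also have "\<dots> = ennreal (0 - Q 0)"
    by (rule nn_integral_FTC_atLeast) (use Q H_nonneg Q_lim in auto)
  finally show ?thesis by simp
qed

definition max_excess :: "real \<Rightarrow> real \<Rightarrow> real \<Rightarrow> real" where
  "max_excess a x y = (if y \<le> x + a then x else y)"

lemma borel_measurable_max_excess [measurable]:
  assumes [measurable]: "f \<in> borel_measurable M" "g \<in> borel_measurable M"
  shows "(\<lambda>\<omega>. max_excess a (f \<omega>) (g \<omega>)) \<in> borel_measurable M"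
  unfolding max_excess_def by measurable

lemma nn_integral_max_excess_nonneg_shift:
  assumes b: "0 \<le> b"
  shows "(\<integral>\<^sup>+x. \<integral>\<^sup>+y. ennreal (exponential_density 1 x * exponential_density 1 y
      * max_excess b x y) \<partial>lborel \<partial>lborel) = ennreal (1 + (b + 1) / 2 * exp (- b))"
proof -
  define H where "H x = x * (1 - exp (- (x + b))) + (x + b + 1) * exp (- (x + b))" for x
  define Q where "Q x = - (x + 1) * exp (- x) - (b + 1) / 2 * exp (- 2 * x - b)" for x
  define P :: "real \<Rightarrow> real" where "P y = - (y + 1) * exp (- y)" for y
  have P_deriv: "DERIV P y :> exp (- y) * y" for y
    unfolding P_def by (auto intro!: derivative_eq_intros simp: algebra_simps)
  have P_lim: "(P \<longlongrightarrow> 0) at_top"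
    unfolding P_def by real_asymp
  have inner: "(\<integral>\<^sup>+y. ennreal (exponential_density 1 y * max_excess b x y) \<partial>lborel)
      = ennreal (H x)" if x: "0 \<le> x" for x
  proof -
    have P_c: "P (x + b) \<le> 0"
      unfolding P_def using x b by (intro mult_nonpos_nonneg) auto
    have "(\<integral>\<^sup>+y. ennreal (exponential_density 1 y * max_excess b x y) \<partial>lborel)
        = ennreal (x * (1 - exp (- (x + b))) - P (x + b))"
      unfolding max_excess_def
      by (rule nn_integral_exponential_density_split[OF _ _ _ P_deriv P_lim]) (use x b P_c in auto)
    also have "x * (1 - exp (- (x + b))) - P (x + b) = H x"
      by (simp add: H_def P_def algebra_simps)
    finally show ?thesis .
  qed
  have H_nonneg: "0 \<le> H x" if "0 \<le> x" for x
    using that b by (auto simp: H_def intro!: add_nonneg_nonneg mult_nonneg_nonneg)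
  have Q_deriv: "DERIV Q x :> exp (- x) * H x" for x
  proof -
    have "exp (- x) * exp (- b - x) = exp (- (x * 2) - b)"
      by (simp add: mult_exp_exp algebra_simps)
    then show ?thesis
      unfolding Q_def H_def
      by (auto intro!: derivative_eq_intros simp: algebra_simps) (simp add: field_simps)
  qed
  have Q_lim: "(Q \<longlongrightarrow> 0) at_top"
    unfolding Q_def by real_asymp
  have "(\<integral>\<^sup>+x. \<integral>\<^sup>+y. ennreal (exponential_density 1 x * exponential_density 1 y
      * max_excess b x y) \<partial>lborel \<partial>lborel) = ennreal (- Q 0)"
    by (rule nn_integral_exponential_density_pair[OF _ _ inner H_nonneg Q_deriv Q_lim])
       (auto simp: H_def)
  then show ?thesis by (simp add: Q_def add.commute)
qed

lemma nn_integral_max_excess_sq_nonneg_shift: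
  assumes b: "0 \<le> b"
  shows "(\<integral>\<^sup>+x. \<integral>\<^sup>+y. ennreal (exponential_density 1 x * exponential_density 1 y
      * (max_excess b x y)\<^sup>2) \<partial>lborel \<partial>lborel) = ennreal (2 + (b\<^sup>2 + 3 * b + 3) / 2 * exp (- b))"
proof -
  define H where "H x = x\<^sup>2 * (1 - exp (- (x + b))) + ((x + b)\<^sup>2 + 2 * (x + b) + 2) * exp (- (x + b))"
    for x
  define Q where "Q x = - (x\<^sup>2 + 2 * x + 2) * exp (- x)
      - ((b + 1) * x + (b + 1) / 2 + (b\<^sup>2 + 2 * b + 2) / 2) * exp (- 2 * x - b)" for x
  define P :: "real \<Rightarrow> real" where "P y = - (y\<^sup>2 + 2 * y + 2) * exp (- y)" for y
  have P_deriv: "DERIV P y :> exp (- y) * y\<^sup>2" for y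
    unfolding P_def by (auto intro!: derivative_eq_intros simp: algebra_simps power2_eq_square)
  have P_lim: "(P \<longlongrightarrow> 0) at_top"
    unfolding P_def by real_asymp
  have inner: "(\<integral>\<^sup>+y. ennreal (exponential_density 1 y * (max_excess b x y)\<^sup>2) \<partial>lborel)
      = ennreal (H x)" if x: "0 \<le> x" for x
  proof -
    have "0 \<le> (x + b)\<^sup>2 + 2 * (x + b) + 2" using x b by simp
    then have P_c: "P (x + b) \<le> 0"
      unfolding P_def by (intro mult_nonpos_nonneg) auto
    have "(\<integral>\<^sup>+y. ennreal (exponential_density 1 y * (max_excess b x y)\<^sup>2) \<partial>lborel)
        = (\<integral>\<^sup>+y. ennreal (exponential_density 1 y * (if y \<le> x + b then x\<^sup>2 else y\<^sup>2)) \<partial>lborel)"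
      by (intro nn_integral_cong) (simp add: max_excess_def)
    also have "\<dots> = ennreal (x\<^sup>2 * (1 - exp (- (x + b))) - P (x + b))"
      by (rule nn_integral_exponential_density_split[OF _ _ _ P_deriv P_lim]) (use x b P_c in auto)
    also have "x\<^sup>2 * (1 - exp (- (x + b))) - P (x + b) = H x"
      by (simp add: H_def P_def algebra_simps)
    finally show ?thesis .
  qed
  have H_nonneg: "0 \<le> H x" if "0 \<le> x" for x
    using that b by (auto simp: H_def intro!: add_nonneg_nonneg mult_nonneg_nonneg)
  have Q_deriv: "DERIV Q x :> exp (- x) * H x" for x
  proof -
    have "exp (- x) * exp (- b - x) = exp (- (x * 2) - b)"
      by (simp add: mult_exp_exp algebra_simps)
    then show ?thesis
      unfolding Q_def H_def
      by (auto intro!: derivative_eq_intros simp: algebra_simps power2_eq_square)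
         (simp add: field_simps)
  qed
  have Q_lim: "(Q \<longlongrightarrow> 0) at_top"
    unfolding Q_def by real_asymp
  have "(\<integral>\<^sup>+x. \<integral>\<^sup>+y. ennreal (exponential_density 1 x * exponential_density 1 y
      * (max_excess b x y)\<^sup>2) \<partial>lborel \<partial>lborel) = ennreal (- Q 0)"
    by (rule nn_integral_exponential_density_pair[OF _ _ inner H_nonneg Q_deriv Q_lim])
       (auto simp: H_def)
  then show ?thesis by (simp add: Q_def algebra_simps add_divide_distrib)
qed

lemma nn_integral_max_excess_uminus:
  fixes \<psi> :: "real \<Rightarrow> real"
  assumes [measurable]: "\<psi> \<in> borel_measurable borel"
  shows "(\<integral>\<^sup>+x. \<integral>\<^sup>+y. ennreal (exponential_density 1 x * exponential_density 1 y
        * \<psi> (max_excess a x y)) \<partial>lborel \<partial>lborel)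
    = (\<integral>\<^sup>+x. \<integral>\<^sup>+y. ennreal (exponential_density 1 x * exponential_density 1 y
        * \<psi> (max_excess (- a) x y)) \<partial>lborel \<partial>lborel)"
proof -
  have "(\<integral>\<^sup>+x. \<integral>\<^sup>+y. ennreal (exponential_density 1 x * exponential_density 1 y
        * \<psi> (max_excess a x y)) \<partial>lborel \<partial>lborel)
    = (\<integral>\<^sup>+y. \<integral>\<^sup>+x. ennreal (exponential_density 1 x * exponential_density 1 y
        * \<psi> (max_excess a x y)) \<partial>lborel \<partial>lborel)"
    by (rule lborel_pair.Fubini'[symmetric]) (unfold split_beta', measurable)
  also have "\<dots> = (\<integral>\<^sup>+x. \<integral>\<^sup>+y. ennreal (exponential_density 1 x * exponential_density 1 y
        * \<psi> (max_excess (- a) x y)) \<partial>lborel \<partial>lborel)"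
  proof (rule nn_integral_cong, rule nn_integral_cong_AE)
    fix x :: real
    show "AE y in lborel. ennreal (exponential_density 1 y * exponential_density 1 x
        * \<psi> (max_excess a y x))
      = ennreal (exponential_density 1 x * exponential_density 1 y * \<psi> (max_excess (- a) x y))"
      using AE_lborel_singleton[of "x - a"]
      by (auto simp: max_excess_def mult.commute elim!: eventually_mono)
  qed
  finally show ?thesis .
qed

lemma nn_integral_max_excess:
  "(\<integral>\<^sup>+x. \<integral>\<^sup>+y. ennreal (exponential_density 1 x * exponential_density 1 y
      * max_excess a x y) \<partial>lborel \<partial>lborel) = ennreal (1 + (\<bar>a\<bar> + 1) / 2 * exp (- \<bar>a\<bar>))"
  using nn_integral_max_excess_nonneg_shift[of "\<bar>a\<bar>"] nn_integral_max_excess_uminus[of "\<lambda>t. t" a]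
  by (cases "0 \<le> a") auto

lemma nn_integral_max_excess_sq:
  "(\<integral>\<^sup>+x. \<integral>\<^sup>+y. ennreal (exponential_density 1 x * exponential_density 1 y
      * (max_excess a x y)\<^sup>2) \<partial>lborel \<partial>lborel)
    = ennreal (2 + (\<bar>a\<bar>\<^sup>2 + 3 * \<bar>a\<bar> + 3) / 2 * exp (- \<bar>a\<bar>))"
  using nn_integral_max_excess_sq_nonneg_shift[of "\<bar>a\<bar>"]
    nn_integral_max_excess_uminus[of "\<lambda>t. t\<^sup>2" a]
  by (cases "0 \<le> a") auto

lemma max_excess_standardize:
  fixes \<sigma> k :: real
  assumes "0 < \<sigma>" "0 < k"
  shows "(max s1 s2 - (if s1 \<ge> s2 then m1 else m2)) / \<sigma>
    = max_excess (k / \<sigma> * (m1 - m2)) (k / \<sigma> * (s1 - m1)) (k / \<sigma> * (s2 - m2)) / k"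
proof -
  have "k / \<sigma> * (s1 - m1) + k / \<sigma> * (m1 - m2) = k / \<sigma> * (s1 - m2)"
    by (simp add: right_diff_distrib)
  then have "k / \<sigma> * (s2 - m2) \<le> k / \<sigma> * (s1 - m1) + k / \<sigma> * (m1 - m2) \<longleftrightarrow> s2 \<le> s1"
    using assms by (simp add: divide_le_cancel mult_le_cancel_left_pos)
  then show ?thesis
    using assms by (auto simp: max_excess_def max_def field_simps)
qed

lemma (in prob_space) nn_integral_indep_exponential_pair:
  assumes W1: "distributed M lborel W1 (exponential_density 1)"
    and W2: "distributed M lborel W2 (exponential_density 1)"
    and indep: "indep_var borel W1 borel W2"
    and [measurable]: "case_prod f \<in> borel_measurable (lborel \<Otimes>\<^sub>M lborel)"
  shows "(\<integral>\<^sup>+\<omega>. ennreal (f (W1 \<omega>) (W2 \<omega>)) \<partial>M)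
    = (\<integral>\<^sup>+x. \<integral>\<^sup>+y. ennreal (exponential_density 1 x * exponential_density 1 y * f x y)
        \<partial>lborel \<partial>lborel)"
proof -
  have "indep_var lborel (id \<circ> W1) lborel (id \<circ> W2)"
    by (rule indep_var_compose[OF indep]) auto
  then have joint: "distributed M (lborel \<Otimes>\<^sub>M lborel) (\<lambda>\<omega>. (W1 \<omega>, W2 \<omega>))
      (\<lambda>(x, y). ennreal (exponential_density 1 x) * ennreal (exponential_density 1 y))"
    by (intro distributed_joint_indep[OF _ _ W1 W2]) (auto intro: lborel.sigma_finite_measure_axioms)
  have "(\<integral>\<^sup>+\<omega>. ennreal (f (W1 \<omega>) (W2 \<omega>)) \<partial>M)
      = (\<integral>\<^sup>+p. (case p of (x, y) \<Rightarrow> ennreal (exponential_density 1 x) * ennreal (exponential_density 1 y))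
          * ennreal (case_prod f p) \<partial>(lborel \<Otimes>\<^sub>M lborel))"
    by (subst distributed_nn_integral[OF joint]) auto
  also have "\<dots> = (\<integral>\<^sup>+x. \<integral>\<^sup>+y. ennreal (exponential_density 1 x) * ennreal (exponential_density 1 y)
      * ennreal (f x y) \<partial>lborel \<partial>lborel)"
    by (subst lborel.nn_integral_fst[symmetric]) auto
  also have "\<dots> = (\<integral>\<^sup>+x. \<integral>\<^sup>+y. ennreal (exponential_density 1 x * exponential_density 1 y * f x y)
        \<partial>lborel \<partial>lborel)"
    by (intro nn_integral_cong) (simp add: ennreal_mult' exponential_density_nonneg)
  finally show ?thesis .
qed

lemma (in prob_space) max_excess_moments:
  fixes a :: real and W1 W2 :: "'a \<Rightarrow> real"
  assumes W1: "distributed M lborel W1 (exponential_density 1)"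
    and W2: "distributed M lborel W2 (exponential_density 1)"
    and indep: "indep_var borel W1 borel W2"
  defines "V \<equiv> \<lambda>\<omega>. max_excess a (W1 \<omega>) (W2 \<omega>)"
  shows "integrable M V" and "(\<integral>\<omega>. V \<omega> \<partial>M) = 1 + (\<bar>a\<bar> + 1) / 2 * exp (- \<bar>a\<bar>)"
    and "integrable M (\<lambda>\<omega>. (V \<omega>)\<^sup>2)"
    and "(\<integral>\<omega>. (V \<omega>)\<^sup>2 \<partial>M) = 2 + (\<bar>a\<bar>\<^sup>2 + 3 * \<bar>a\<bar> + 3) / 2 * exp (- \<bar>a\<bar>)"
proof -
  have [measurable]: "W1 \<in> borel_measurable M" "W2 \<in> borel_measurable M"
    using W1 W2 by (auto simp: distributed_def)
  have "AE \<omega> in M. 0 \<le> W1 \<omega>" "AE \<omega> in M. 0 \<le> W2 \<omega>"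
    by (subst distributed_AE2[OF W1] distributed_AE2[OF W2]; simp add: exponential_density_def)+
  then have V_nonneg: "AE \<omega> in M. 0 \<le> V \<omega>"
    by eventually_elim (auto simp: V_def max_excess_def)
  have "(\<integral>\<^sup>+\<omega>. ennreal (V \<omega>) \<partial>M) = ennreal (1 + (\<bar>a\<bar> + 1) / 2 * exp (- \<bar>a\<bar>))"
    unfolding V_def
    by (subst nn_integral_indep_exponential_pair[OF W1 W2 indep]) (auto simp: nn_integral_max_excess)
  from nn_integral_eq_integrable[THEN iffD1, OF _ V_nonneg _ this]
  show "integrable M V" "(\<integral>\<omega>. V \<omega> \<partial>M) = 1 + (\<bar>a\<bar> + 1) / 2 * exp (- \<bar>a\<bar>)"
    by (auto simp: V_def)
  have "(\<integral>\<^sup>+\<omega>. ennreal ((V \<omega>)\<^sup>2) \<partial>M)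
      = ennreal (2 + (\<bar>a\<bar>\<^sup>2 + 3 * \<bar>a\<bar> + 3) / 2 * exp (- \<bar>a\<bar>))"
    unfolding V_def
    by (subst nn_integral_indep_exponential_pair[OF W1 W2 indep, where f = "\<lambda>x y. (max_excess a x y)\<^sup>2"])
       (auto simp: nn_integral_max_excess_sq)
  from nn_integral_eq_integrable[THEN iffD1, OF _ _ _ this]
  show "integrable M (\<lambda>\<omega>. (V \<omega>)\<^sup>2)"
    and "(\<integral>\<omega>. (V \<omega>)\<^sup>2 \<partial>M) = 2 + (\<bar>a\<bar>\<^sup>2 + 3 * \<bar>a\<bar> + 3) / 2 * exp (- \<bar>a\<bar>)"
    by (auto simp: V_def add_nonneg_nonneg)
qed

theorem lemma4p1:
  fixes M :: "'a measure" and X :: "nat \<Rightarrow> nat \<Rightarrow> 'a \<Rightarrow> real"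
    and n :: nat and \<mu>1 \<mu>2 \<sigma> :: real
  assumes P: "prob_space M"
    and n: "n \<ge> 2"
    and sigma: "\<sigma> > 0"
    and indep: "prob_space.indep_vars M (\<lambda>_. borel) (\<lambda>(i, j). X i j) ({1, 2} \<times> {1..n})"
    and d1: "\<forall>j\<in>{1..n}. distributed M lborel (X 1 j)
               (\<lambda>x. ennreal (exponential_density (1 / \<sigma>) (x - \<mu>1)))"
    and d2: "\<forall>j\<in>{1..n}. distributed M lborel (X 2 j)
               (\<lambda>x. ennreal (exponential_density (1 / \<sigma>) (x - \<mu>2)))"
  defines "U \<equiv> \<lambda>\<omega>. (max (sample_min n (X 1) \<omega>) (sample_min n (X 2) \<omega>)
                     - (if sample_min n (X 1) \<omega> \<ge> sample_min n (X 2) \<omega> then \<mu>1 else \<mu>2)) / \<sigma>"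
    and "\<mu> \<equiv> real n * (max \<mu>1 \<mu>2 - min \<mu>1 \<mu>2) / \<sigma>"
  shows "(integrable M U \<and>
         (\<integral>\<omega>. U \<omega> \<partial>M) = (1 / real n) * (((\<mu> + 1) / 2) * exp (- \<mu>) + 1)) \<and>
         (integrable M (\<lambda>\<omega>. (U \<omega>)\<^sup>2) \<and>
         (\<integral>\<omega>. (U \<omega>)\<^sup>2 \<partial>M) =
           (1 / (real n)\<^sup>2) * (((\<mu>\<^sup>2 + 3 * \<mu> + 3) / 2) * exp (- \<mu>) + 2))"
proof -
  interpret prob_space M by (rule P)
  define c where "c = real n / \<sigma>"
  define loc where "loc i = (if i = (1::nat) then \<mu>1 else \<mu>2)" for i
  define W where "W i \<omega> = c * (sample_min n (X i) \<omega> - loc i)" for i \<omega>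
  have W_exp: "distributed M lborel (W i) (exponential_density 1)" if i: "i \<in> {1, 2}" for i
  proof -
    have "distributed M lborel (sample_min n (X i))
        (\<lambda>x. ennreal (exponential_density (card {1..n} * (1 / \<sigma>)) (x - loc i)))"
      unfolding sample_min_def[abs_def] using i n sigma d1 d2
      by (intro distributed_exponential_Min_shift indep_vars_row[OF indep]) (auto simp: loc_def)
    then show ?thesis
      unfolding W_def[abs_def] c_def using n sigma
      by (intro distributed_exponential_standardize) auto
  qed
  have W_indep: "indep_var borel (W 1) borel (W 2)"
  proof -
    have "indep_var borel (\<lambda>\<omega>. Min ((\<lambda>j. X 1 j \<omega>) ` {1..n}))
        borel (\<lambda>\<omega>. Min ((\<lambda>j. X 2 j \<omega>) ` {1..n}))"
      by (rule indep_var_Min_blocks[OF indep]) auto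
    from indep_var_compose[OF this, of "\<lambda>s. c * (s - \<mu>1)" borel "\<lambda>s. c * (s - \<mu>2)" borel]
    show ?thesis by (simp add: W_def[abs_def] loc_def sample_min_def comp_def)
  qed
  have U_eq: "U = (\<lambda>\<omega>. max_excess (c * (\<mu>1 - \<mu>2)) (W 1 \<omega>) (W 2 \<omega>) / n)"
    using max_excess_standardize[OF sigma, of n] n by (simp add: U_def W_def loc_def c_def fun_eq_iff)
  have \<mu>_eq: "\<mu> = \<bar>c * (\<mu>1 - \<mu>2)\<bar>"
    using n sigma by (simp add: \<mu>_def c_def abs_mult max_def min_def)
  show ?thesis
    using max_excess_moments[OF W_exp W_exp W_indep, of "c * (\<mu>1 - \<mu>2)"] n
    unfolding U_eq \<mu>_eq by (simp add: power_divide field_simps)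
qed

end
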